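(* The category $\mathbf{AlgLPries}$ of algebraic L-spaces and coherent L-morphisms is a full subcategory of the category $\mathbf{ConLPries}$ of continuous L-spaces and proper L-morphisms.
   Context: A Priestley space is a Stone space $X$ with a partial order such that clopen upsets separate points. An L-space is a Priestley space in which the downset of each clopen set is clopen and the closure of each open upset is open. ${\sf ClopUp}(X)$ is the set of clopen upsets; $\mathrm{cl}$ denotes closure. An L-morphism is a continuous order-preserving map $f:X\to X'$ between L-spaces with $f^{-1}(\mathrm{cl}\,U)=\mathrm{cl}\,f^{-1}(U)$ for every open upset $U$ of $X'$. The spatial part of $X$ is $Y=\{y\in X\mid{\downarrow}y\text{ clopen}\}$. A Scott upset is a closed upset $F$ with $\min F\subseteq Y$; ${\sf ClopSUp}(X)$ is the set of clopen Scott upsets. For $U,V\in{\sf ClopUp}(X)$, $V\ll U$ means that for every open upset $W$, $U\subseteq\mathrm{cl}\,W$ implies $V\subseteq W$; $\ker U=\bigcup\{V\in{\sf ClopUp}(X)\mid V\ll U\}$; $\mathrm{core}\,U=\bigcup\{V\in{\sf ClopSUp}(X)\mid V\subseteq U\}$. $X$ is a continuous L-space if $\ker U$ is dense in $U$ for each $U\in{\sf ClopUp}(X)$, and an algebraic L-space if $\mathrm{core}\,U$ is dense in $U$ for each $U\in{\sf ClopUp}(X)$. An L-morphism $f:X_1\to X_2$ is proper if $f^{-1}(\ker U)\subseteq\ker f^{-1}(U)$, and coherent if $f^{-1}(\mathrm{core}\,U)\subseteq\mathrm{core}\,f^{-1}(U)$, for all $U\in{\sf ClopUp}(X_2)$.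 *)

theory Defs
  imports "HOL-Analysis.Analysis"
begin

text \<open>An ordered topological space is given by a topology T on the carrier
  topspace T together with a relation le, considered on the carrier.\<close>

definition clopenin :: "'a topology \<Rightarrow> 'a set \<Rightarrow> bool" where
  "clopenin T C \<longleftrightarrow> openin T C \<and> closedin T C"

definition stone_space :: "'a topology \<Rightarrow> bool" where
  "stone_space T \<longleftrightarrow> compact_space T \<and> Hausdorff_space T \<and>
     (\<forall>U x. openin T U \<and> x \<in> U \<longrightarrow> (\<exists>C. clopenin T C \<and> x \<in> C \<and> C \<subseteq> U))"

definition partial_order_on_carrier :: "'a topology \<Rightarrow> ('a \<Rightarrow> 'a \<Rightarrow> bool) \<Rightarrow> bool" where
  "partial_order_on_carrier T le \<longleftrightarrow>
     (\<forall>x\<in>topspace T. le x x) \<and>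
     (\<forall>x\<in>topspace T. \<forall>y\<in>topspace T. le x y \<and> le y x \<longrightarrow> x = y) \<and>
     (\<forall>x\<in>topspace T. \<forall>y\<in>topspace T. \<forall>z\<in>topspace T. le x y \<and> le y z \<longrightarrow> le x z)"

definition is_upset :: "'a topology \<Rightarrow> ('a \<Rightarrow> 'a \<Rightarrow> bool) \<Rightarrow> 'a set \<Rightarrow> bool" where
  "is_upset T le U \<longleftrightarrow> U \<subseteq> topspace T \<and>
     (\<forall>x\<in>U. \<forall>y\<in>topspace T. le x y \<longrightarrow> y \<in> U)"

definition downset :: "'a topology \<Rightarrow> ('a \<Rightarrow> 'a \<Rightarrow> bool) \<Rightarrow> 'a set \<Rightarrow> 'a set" where
  "downset T le S = {y \<in> topspace T. \<exists>x\<in>S. le y x}"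

definition ClopUp :: "'a topology \<Rightarrow> ('a \<Rightarrow> 'a \<Rightarrow> bool) \<Rightarrow> 'a set set" where
  "ClopUp T le = {U. clopenin T U \<and> is_upset T le U}"

definition priestley_space :: "'a topology \<Rightarrow> ('a \<Rightarrow> 'a \<Rightarrow> bool) \<Rightarrow> bool" where
  "priestley_space T le \<longleftrightarrow> stone_space T \<and> partial_order_on_carrier T le \<and>
     (\<forall>x\<in>topspace T. \<forall>y\<in>topspace T. \<not> le x y \<longrightarrow>
        (\<exists>U\<in>ClopUp T le. x \<in> U \<and> y \<notin> U))"

definition L_space :: "'a topology \<Rightarrow> ('a \<Rightarrow> 'a \<Rightarrow> bool) \<Rightarrow> bool" where
  "L_space T le \<longleftrightarrow> priestley_space T le \<and>
     (\<forall>C. clopenin T C \<longrightarrow> clopenin T (downset T le C)) \<and>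
     (\<forall>U. openin T U \<and> is_upset T le U \<longrightarrow> openin T (T closure_of U))"

definition pre :: "'a topology \<Rightarrow> ('a \<Rightarrow> 'b) \<Rightarrow> 'b set \<Rightarrow> 'a set" where
  "pre T f U = {x \<in> topspace T. f x \<in> U}"

definition L_morphism ::
  "'a topology \<Rightarrow> ('a \<Rightarrow> 'a \<Rightarrow> bool) \<Rightarrow> 'b topology \<Rightarrow> ('b \<Rightarrow> 'b \<Rightarrow> bool) \<Rightarrow> ('a \<Rightarrow> 'b) \<Rightarrow> bool" where
  "L_morphism T1 le1 T2 le2 f \<longleftrightarrow>
     L_space T1 le1 \<and> L_space T2 le2 \<and> continuous_map T1 T2 f \<and>
     (\<forall>x\<in>topspace T1. \<forall>y\<in>topspace T1. le1 x y \<longrightarrow> le2 (f x) (f y)) \<and>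
     (\<forall>U. openin T2 U \<and> is_upset T2 le2 U \<longrightarrow>
        pre T1 f (T2 closure_of U) = T1 closure_of (pre T1 f U))"

definition spatial_part :: "'a topology \<Rightarrow> ('a \<Rightarrow> 'a \<Rightarrow> bool) \<Rightarrow> 'a set" where
  "spatial_part T le = {y \<in> topspace T. clopenin T (downset T le {y})}"

definition minimals :: "('a \<Rightarrow> 'a \<Rightarrow> bool) \<Rightarrow> 'a set \<Rightarrow> 'a set" where
  "minimals le F = {x \<in> F. \<forall>y\<in>F. le y x \<longrightarrow> y = x}"

definition scott_upset :: "'a topology \<Rightarrow> ('a \<Rightarrow> 'a \<Rightarrow> bool) \<Rightarrow> 'a set \<Rightarrow> bool" where
  "scott_upset T le F \<longleftrightarrow> closedin T F \<and> is_upset T le F \<and>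
     minimals le F \<subseteq> spatial_part T le"

definition ClopSUp :: "'a topology \<Rightarrow> ('a \<Rightarrow> 'a \<Rightarrow> bool) \<Rightarrow> 'a set set" where
  "ClopSUp T le = {F. clopenin T F \<and> scott_upset T le F}"

definition way_below :: "'a topology \<Rightarrow> ('a \<Rightarrow> 'a \<Rightarrow> bool) \<Rightarrow> 'a set \<Rightarrow> 'a set \<Rightarrow> bool" where
  "way_below T le V U \<longleftrightarrow>
     (\<forall>W. openin T W \<and> is_upset T le W \<longrightarrow> U \<subseteq> T closure_of W \<longrightarrow> V \<subseteq> W)"

definition ker :: "'a topology \<Rightarrow> ('a \<Rightarrow> 'a \<Rightarrow> bool) \<Rightarrow> 'a set \<Rightarrow> 'a set" where
  "ker T le U = \<Union>{V \<in> ClopUp T le. way_below T le V U}"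

definition core :: "'a topology \<Rightarrow> ('a \<Rightarrow> 'a \<Rightarrow> bool) \<Rightarrow> 'a set \<Rightarrow> 'a set" where
  "core T le U = \<Union>{V \<in> ClopSUp T le. V \<subseteq> U}"

text \<open>A subset D of U is dense in U iff U is contained in the closure of D.\<close>
definition continuous_L_space :: "'a topology \<Rightarrow> ('a \<Rightarrow> 'a \<Rightarrow> bool) \<Rightarrow> bool" where
  "continuous_L_space T le \<longleftrightarrow> L_space T le \<and>
     (\<forall>U\<in>ClopUp T le. U \<subseteq> T closure_of (ker T le U))"

definition algebraic_L_space :: "'a topology \<Rightarrow> ('a \<Rightarrow> 'a \<Rightarrow> bool) \<Rightarrow> bool" where
  "algebraic_L_space T le \<longleftrightarrow> L_space T le \<and>
     (\<forall>U\<in>ClopUp T le. U \<subseteq> T closure_of (core T le U))"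

definition proper_L_morphism ::
  "'a topology \<Rightarrow> ('a \<Rightarrow> 'a \<Rightarrow> bool) \<Rightarrow> 'b topology \<Rightarrow> ('b \<Rightarrow> 'b \<Rightarrow> bool) \<Rightarrow> ('a \<Rightarrow> 'b) \<Rightarrow> bool" where
  "proper_L_morphism T1 le1 T2 le2 f \<longleftrightarrow> L_morphism T1 le1 T2 le2 f \<and>
     (\<forall>U\<in>ClopUp T2 le2. pre T1 f (ker T2 le2 U) \<subseteq> ker T1 le1 (pre T1 f U))"

definition coherent_L_morphism ::
  "'a topology \<Rightarrow> ('a \<Rightarrow> 'a \<Rightarrow> bool) \<Rightarrow> 'b topology \<Rightarrow> ('b \<Rightarrow> 'b \<Rightarrow> bool) \<Rightarrow> ('a \<Rightarrow> 'b) \<Rightarrow> bool" where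
  "coherent_L_morphism T1 le1 T2 le2 f \<longleftrightarrow> L_morphism T1 le1 T2 le2 f \<and>
     (\<forall>U\<in>ClopUp T2 le2. pre T1 f (core T2 le2 U) \<subseteq> core T1 le1 (pre T1 f U))"

end

theory Submission
  imports Defs
begin

text \<open>In a Priestley space every Scott upset V is way below itself: for x in V take, by
  Zorn's lemma and compactness, a minimal y \<le> x in V; then y is spatial, so the open
  set \<down>y meets every upset W whose closure contains y, which puts y and hence x into W.
  Consequently core U \<subseteq> ker U. In an algebraic L-space core U is moreover an open upset
  whose closure contains U, so everything way below U lies in core U. Hence ker and core
  coincide on clopen upsets of algebraic L-spaces, which turns density of cores into
  density of kernels and coherence into properness.\<close>

lemma closedin_downset_singleton:
  assumes P: "priestley_space T le" and c: "c \<in> topspace T"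
  shows "closedin T (downset T le {c})"
proof -
  have "topspace T - downset T le {c} = \<Union>{U \<in> ClopUp T le. c \<notin> U}"
  proof
    show "topspace T - downset T le {c} \<subseteq> \<Union>{U \<in> ClopUp T le. c \<notin> U}"
      using P c unfolding priestley_space_def downset_def by blast
    show "\<Union>{U \<in> ClopUp T le. c \<notin> U} \<subseteq> topspace T - downset T le {c}"
      using c unfolding ClopUp_def is_upset_def downset_def by blast
  qed
  moreover have "openin T (\<Union>{U \<in> ClopUp T le. c \<notin> U})"
    by (rule openin_Union) (auto simp: ClopUp_def clopenin_def)
  ultimately show ?thesis
    unfolding closedin_def downset_def by auto
qed

lemma chain_has_lower_bound_in_closed:
  assumes compact: "compact_space T" and po: "partial_order_on_carrier T le"
    and down_closed: "\<And>c. c \<in> topspace T \<Longrightarrow> closedin T (downset T le {c})"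
    and F: "closedin T F" and C: "C \<subseteq> F" "C \<noteq> {}"
    and chain: "\<forall>a\<in>C. \<forall>b\<in>C. le a b \<or> le b a"
  obtains u where "u \<in> F" "\<forall>c\<in>C. le u c"
proof -
  have C_top: "C \<subseteq> topspace T"
    using C F closedin_subset by blast
  define \<D> where "\<D> = (\<lambda>c. F \<inter> downset T le {c}) ` C"
  have \<D>_chain: "subset.chain UNIV \<D>"
  proof -
    have "downset T le {a} \<subseteq> downset T le {b}" if "a \<in> C" "b \<in> C" "le a b" for a b
      using that C_top po unfolding downset_def partial_order_on_carrier_def by blast
    then show ?thesis
      unfolding \<D>_def subset_chain_def using chain by blast
  qed
  have "\<Inter>\<D> \<noteq> {}"
  proof (rule compact_space_fip[THEN iffD1, OF compact, rule_format], intro conjI allI impI ballI)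
    show "closedin T D" if "D \<in> \<D>" for D
      using that F down_closed C_top unfolding \<D>_def by blast
    show "\<Inter>\<G> \<noteq> {}" if "finite \<G> \<and> \<G> \<subseteq> \<D>" for \<G>
    proof (cases "\<G> = {}")
      case False
      have "\<Inter>\<G> \<in> \<G>"
        using that False \<D>_chain by (intro Inter_in_chain) (auto simp: subset_chain_def)
      moreover have "D \<noteq> {}" if "D \<in> \<D>" for D
        using that C C_top po unfolding \<D>_def downset_def partial_order_on_carrier_def by blast
      ultimately show ?thesis
        using that by blast
    qed simp
  qed
  then obtain u where "u \<in> \<Inter>\<D>"
    by blast
  then show thesis
    using that C unfolding \<D>_def downset_def by blast
qed

lemma closedin_minimal_below:
  assumes compact: "compact_space T" and po: "partial_order_on_carrier T le"
    and down_closed: "\<And>c. c \<in> topspace T \<Longrightarrow> closedin T (downset T le {c})"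
    and F: "closedin T F" and x: "x \<in> F"
  obtains y where "y \<in> minimals le F" "le y x"
proof -
  define A where "A = F \<inter> downset T le {x}"
  have x_top: "x \<in> topspace T"
    using F x closedin_subset by blast
  have A_top: "A \<subseteq> topspace T"
    unfolding A_def downset_def by blast
  have A_closed: "closedin T A"
    unfolding A_def using F down_closed x_top by blast
  have refl: "\<And>a. a \<in> topspace T \<Longrightarrow> le a a"
    and antisym: "\<And>a b. a \<in> topspace T \<Longrightarrow> b \<in> topspace T \<Longrightarrow> le a b \<Longrightarrow> le b a \<Longrightarrow> a = b"
    and trans: "\<And>a b c. a \<in> topspace T \<Longrightarrow> b \<in> topspace T \<Longrightarrow> c \<in> topspace T \<Longrightarrow>
      le a b \<Longrightarrow> le b c \<Longrightarrow> le a c"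
    using po unfolding partial_order_on_carrier_def by blast+
  have "partial_order_on A (relation_of (\<lambda>a b. le b a) A)"
    by (rule partial_order_on_relation_ofI) (use A_top refl antisym trans in blast)+
  moreover have "\<exists>u\<in>A. \<forall>a\<in>C. le u a" if "C \<in> Chains (relation_of (\<lambda>a b. le b a) A)" for C
  proof (cases "C = {}")
    case True
    have "x \<in> A"
      using x x_top refl unfolding A_def downset_def by blast
    then show ?thesis
      using True by blast
  next
    case False
    have "C \<subseteq> A" "\<forall>a\<in>C. \<forall>b\<in>C. le a b \<or> le b a"
      using that False unfolding Chains_def relation_of_def by blast+
    then obtain u where "u \<in> A" "\<forall>c\<in>C. le u c"
      using chain_has_lower_bound_in_closed[OF compact po down_closed A_closed _ False] by blast
    then show ?thesis
      by blast
  qed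
  ultimately obtain m where m: "m \<in> A" "\<And>a. a \<in> A \<Longrightarrow> le a m \<Longrightarrow> a = m"
    using predicate_Zorn[of A "\<lambda>a b. le b a"] by blast
  have m_top: "m \<in> topspace T" and mx: "le m x"
    using m(1) unfolding A_def downset_def by blast+
  have "y = m" if "y \<in> F" "le y m" for y
  proof (rule m(2))
    have "y \<in> topspace T"
      using that F closedin_subset by blast
    then show "y \<in> A"
      using that m_top mx x_top trans unfolding A_def downset_def by blast
  qed fact
  then have "m \<in> minimals le F"
    using m(1) unfolding minimals_def A_def by blast
  then show thesis
    using that mx by blast
qed

lemma scott_upset_way_below_self:
  assumes P: "priestley_space T le" and V: "scott_upset T le V"
  shows "way_below T le V V"
  unfolding way_below_def
proof (intro allI impI subsetI)
  fix W x
  assume W: "openin T W \<and> is_upset T le W" and V_cl: "V \<subseteq> T closure_of W" and x: "x \<in> V"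
  have po: "partial_order_on_carrier T le" and compact: "compact_space T"
    using P unfolding priestley_space_def stone_space_def by blast+
  have V_closed: "closedin T V" and V_min: "minimals le V \<subseteq> spatial_part T le"
    using V unfolding scott_upset_def by blast+
  obtain y where y: "y \<in> minimals le V" "le y x"
    using closedin_minimal_below[OF compact po closedin_downset_singleton[OF P] V_closed x] .
  then have y_V: "y \<in> V" and y_top: "y \<in> topspace T" and down_y: "openin T (downset T le {y})"
    using V_min unfolding minimals_def spatial_part_def clopenin_def by blast+
  have "y \<in> downset T le {y}"
    using y_top po unfolding downset_def partial_order_on_carrier_def by blast
  moreover have "y \<in> T closure_of W"
    using V_cl y_V by blast
  ultimately obtain z where "z \<in> W" "z \<in> downset T le {y}"
    using down_y unfolding in_closure_of by blast
  then have "z \<in> W" "le z y"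
    unfolding downset_def by blast+
  then have "y \<in> W"
    using W y_top unfolding is_upset_def by blast
  moreover have "x \<in> topspace T"
    using V_closed x closedin_subset by blast
  ultimately show "x \<in> W"
    using W y(2) unfolding is_upset_def by blast
qed

lemma core_subset_ker:
  assumes "priestley_space T le"
  shows "core T le U \<subseteq> ker T le U"
  unfolding core_def ker_def
proof (intro Union_mono subsetI)
  fix V
  assume "V \<in> {V \<in> ClopSUp T le. V \<subseteq> U}"
  then have V: "clopenin T V" "scott_upset T le V" "V \<subseteq> U"
    unfolding ClopSUp_def by blast+
  have "V \<in> ClopUp T le"
    using V unfolding ClopUp_def scott_upset_def by blast
  moreover have "way_below T le V U"
    using scott_upset_way_below_self[OF assms V(2)] V(3) unfolding way_below_def by blast
  ultimately show "V \<in> {V \<in> ClopUp T le. way_below T le V U}"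
    by blast
qed

lemma openin_core: "openin T (core T le U)"
  unfolding core_def ClopSUp_def clopenin_def by (rule openin_Union) blast

lemma is_upset_core: "is_upset T le (core T le U)"
  unfolding core_def ClopSUp_def scott_upset_def is_upset_def by blast

lemma way_belowD:
  assumes "way_below T le V U" "openin T W" "is_upset T le W" "U \<subseteq> T closure_of W"
  shows "V \<subseteq> W"
  using assms unfolding way_below_def by blast

lemma ker_subset_core:
  assumes "U \<subseteq> T closure_of (core T le U)"
  shows "ker T le U \<subseteq> core T le U"
  unfolding ker_def
proof (rule Union_least)
  fix V
  assume "V \<in> {V \<in> ClopUp T le. way_below T le V U}"
  then have "way_below T le V U"
    by blast
  then show "V \<subseteq> core T le U"
    using openin_core is_upset_core assms by (rule way_belowD)
qed

lemma ker_eq_core: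
  assumes A: "algebraic_L_space T le" and U: "U \<in> ClopUp T le"
  shows "ker T le U = core T le U"
proof (rule equalityI)
  have "U \<subseteq> T closure_of (core T le U)"
    using A U unfolding algebraic_L_space_def by blast
  then show "ker T le U \<subseteq> core T le U"
    by (rule ker_subset_core)
  have "priestley_space T le"
    using A unfolding algebraic_L_space_def L_space_def by blast
  then show "core T le U \<subseteq> ker T le U"
    by (rule core_subset_ker)
qed

lemma algebraic_imp_continuous_L_space:
  assumes "algebraic_L_space T le"
  shows "continuous_L_space T le"
  using assms ker_eq_core[OF assms]
  unfolding algebraic_L_space_def continuous_L_space_def by simp

lemma L_morphism_pre_ClopUp:
  assumes f: "L_morphism T1 le1 T2 le2 f" and U: "U \<in> ClopUp T2 le2"
  shows "pre T1 f U \<in> ClopUp T1 le1"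
proof -
  have cont: "continuous_map T1 T2 f"
    and mono: "\<forall>x\<in>topspace T1. \<forall>y\<in>topspace T1. le1 x y \<longrightarrow> le2 (f x) (f y)"
    using f unfolding L_morphism_def by blast+
  have "openin T2 U" "closedin T2 U" "is_upset T2 le2 U"
    using U unfolding ClopUp_def clopenin_def by blast+
  then show ?thesis
    using openin_continuous_map_preimage[OF cont] closedin_continuous_map_preimage[OF cont] mono
      continuous_map_image_subset_topspace[OF cont]
    unfolding ClopUp_def clopenin_def is_upset_def pre_def by auto
qed

lemma coherent_iff_proper_L_morphism:
  assumes "algebraic_L_space T1 le1" "algebraic_L_space T2 le2"
  shows "coherent_L_morphism T1 le1 T2 le2 f \<longleftrightarrow> proper_L_morphism T1 le1 T2 le2 f"
  using ker_eq_core[OF assms(1)] ker_eq_core[OF assms(2)] L_morphism_pre_ClopUp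
  unfolding coherent_L_morphism_def proper_L_morphism_def by metis

theorem theorem4p8:
  fixes T1 :: "'a topology" and le1 :: "'a \<Rightarrow> 'a \<Rightarrow> bool"
    and T2 :: "'b topology" and le2 :: "'b \<Rightarrow> 'b \<Rightarrow> bool"
    and f :: "'a \<Rightarrow> 'b"
  shows "(algebraic_L_space T1 le1 \<longrightarrow> continuous_L_space T1 le1) \<and>
         (algebraic_L_space T1 le1 \<and> algebraic_L_space T2 le2 \<longrightarrow>
            (coherent_L_morphism T1 le1 T2 le2 f \<longleftrightarrow> proper_L_morphism T1 le1 T2 le2 f))"
  using algebraic_imp_continuous_L_space coherent_iff_proper_L_morphism by blast

end
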